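(* Let $n=p_1^{\alpha_1}p_2^{\alpha_2}p_3^{\alpha_3}p_4^{\alpha_4}$ where $p_1,p_2,p_3,p_4$ are distinct primes and $\alpha_i\geq 1$ are integers. Then $\mathbb{AG}(\mathbb{Z}_n)$ is perfect if and only if $\alpha_i=1$ for all $i\in\{1,2,3,4\}$.
   Context: For a commutative ring $R$ with unity, the annihilating-ideal graph $\mathbb{AG}(R)$ is the simple graph whose vertex set is the set of all non-zero ideals of $R$ with non-zero annihilator, two distinct vertices $I,J$ being adjacent if and only if $IJ=0$. A graph $G$ is perfect if $\omega(H)=\chi(H)$ for every induced subgraph $H$ of $G$. *)

theory Defs
  imports "HOL-Algebra.Ideal_Product" "HOL-Number_Theory.Residues"
begin

definition is_clique :: "('a \<Rightarrow> 'a \<Rightarrow> bool) \<Rightarrow> 'a set \<Rightarrow> bool" where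
  "is_clique E K \<longleftrightarrow> (\<forall>x\<in>K. \<forall>y\<in>K. x \<noteq> y \<longrightarrow> E x y)"

definition clique_number :: "('a \<Rightarrow> 'a \<Rightarrow> bool) \<Rightarrow> 'a set \<Rightarrow> nat" where
  "clique_number E S = Max {card K | K. K \<subseteq> S \<and> is_clique E K}"

definition chromatic_number :: "('a \<Rightarrow> 'a \<Rightarrow> bool) \<Rightarrow> 'a set \<Rightarrow> nat" where
  "chromatic_number E S = (LEAST k. \<exists>f :: 'a \<Rightarrow> nat.
      (\<forall>x\<in>S. f x < k) \<and> (\<forall>x\<in>S. \<forall>y\<in>S. x \<noteq> y \<and> E x y \<longrightarrow> f x \<noteq> f y))"

definition perfect_graph :: "'a set \<Rightarrow> ('a \<Rightarrow> 'a \<Rightarrow> bool) \<Rightarrow> bool" where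
  "perfect_graph V E \<longleftrightarrow> (\<forall>S\<subseteq>V. clique_number E S = chromatic_number E S)"

definition annihilator :: "('a, 'b) ring_scheme \<Rightarrow> 'a set \<Rightarrow> 'a set" where
  "annihilator R I = {r \<in> carrier R. \<forall>x\<in>I. r \<otimes>\<^bsub>R\<^esub> x = \<zero>\<^bsub>R\<^esub>}"

definition AG_vertices :: "('a, 'b) ring_scheme \<Rightarrow> 'a set set" where
  "AG_vertices R = {I. ideal I R \<and> I \<noteq> {\<zero>\<^bsub>R\<^esub>} \<and> annihilator R I \<noteq> {\<zero>\<^bsub>R\<^esub>}}"

definition AG_adj :: "('a, 'b) ring_scheme \<Rightarrow> 'a set \<Rightarrow> 'a set \<Rightarrow> bool" where
  "AG_adj R I J \<longleftrightarrow> I \<noteq> J \<and> ideal_prod R I J = {\<zero>\<^bsub>R\<^esub>}"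

definition AG_perfect :: "('a, 'b) ring_scheme \<Rightarrow> bool" where
  "AG_perfect R \<longleftrightarrow> perfect_graph (AG_vertices R) (AG_adj R)"

end

theory Submission
  imports Defs "HOL-Combinatorics.Permutations"
begin

(* For squarefree n = p1 p2 p3 p4, label an ideal I of Z_n by its support, the set of those p_i
   that do not divide every element of I. Then IJ = 0 iff I and J have disjoint supports, so the
   graph is a disjointness graph of nonempty subsets of a four-element set, and such graphs are
   perfect. The points occurring as singleton supports (atoms) yield a clique, and colouring a
   vertex by an atom in its support is proper. The vertices whose support misses all atoms either
   form an independent set, which costs one extra colour and extends the clique by one vertex, or
   contain an edge; then two disjoint supports of size at least 2 use up all four points, so there
   are no atoms, every edge splits the points into two pairs, and membership of one fixed point is
   a proper 2-colouring.
   If some p_i^2 divides n, the principal ideals generated by five suitable divisors of n induce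
   a 5-cycle, whose clique number 2 differs from its chromatic number 3. *)

section \<open>Cliques and colourings\<close>

definition proper_colouring :: "('a \<Rightarrow> 'a \<Rightarrow> bool) \<Rightarrow> 'a set \<Rightarrow> ('a \<Rightarrow> 'c) \<Rightarrow> bool" where
  "proper_colouring E S f \<longleftrightarrow> (\<forall>x\<in>S. \<forall>y\<in>S. x \<noteq> y \<and> E x y \<longrightarrow> f x \<noteq> f y)"

lemma chromatic_number_altdef:
  "chromatic_number E S = (LEAST k. \<exists>f :: 'a \<Rightarrow> nat. f ` S \<subseteq> {..<k} \<and> proper_colouring E S f)"
  unfolding chromatic_number_def proper_colouring_def by (simp add: image_subset_iff)

lemma card_clique_le_card_colours:
  assumes "proper_colouring E S f" "f ` S \<subseteq> C" "finite C" "K \<subseteq> S" "is_clique E K"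
  shows "card K \<le> card C"
proof -
  have "inj_on f K"
    using assms(1,4,5) unfolding inj_on_def proper_colouring_def is_clique_def by blast
  with assms(2-4) show ?thesis by (intro card_inj_on_le) auto
qed

lemma proper_colouring_nat:
  assumes "proper_colouring E S f" "f ` S \<subseteq> C" "finite C"
  obtains g :: "'a \<Rightarrow> nat" where "g ` S \<subseteq> {..<card C}" "proper_colouring E S g"
proof -
  obtain h where h: "bij_betw h C {0..<card C}"
    using ex_bij_betw_finite_nat[OF assms(3)] by blast
  show thesis
  proof
    show "(h \<circ> f) ` S \<subseteq> {..<card C}"
      using assms(2) bij_betwE[OF h] by fastforce
    show "proper_colouring E S (h \<circ> f)"
      using assms(1,2) bij_betw_imp_inj_on[OF h]
      unfolding proper_colouring_def inj_on_def by (metis comp_apply image_subset_iff)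
  qed
qed

lemma chromatic_number_le:
  assumes "proper_colouring E S f" "f ` S \<subseteq> C" "finite C"
  shows "chromatic_number E S \<le> card C"
proof -
  obtain g :: "'a \<Rightarrow> nat" where "g ` S \<subseteq> {..<card C}" "proper_colouring E S g"
    using proper_colouring_nat[OF assms] .
  then show ?thesis
    unfolding chromatic_number_altdef by (blast intro: Least_le)
qed

lemma chromatic_number_colouring:
  assumes "finite S"
  obtains f :: "'a \<Rightarrow> nat"
  where "f ` S \<subseteq> {..<chromatic_number E S}" "proper_colouring E S f"
proof -
  have "proper_colouring E S id" "id ` S \<subseteq> S"
    unfolding proper_colouring_def by simp_all
  then obtain g :: "'a \<Rightarrow> nat" where "g ` S \<subseteq> {..<card S}" "proper_colouring E S g"
    using proper_colouring_nat assms by metis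
  then have "\<exists>k f. f ` S \<subseteq> {..<k} \<and> proper_colouring E S (f :: 'a \<Rightarrow> nat)"
    by blast
  from LeastI_ex[OF this] show thesis
    using that unfolding chromatic_number_altdef by blast
qed

lemma finite_clique_sizes:
  assumes "finite S"
  shows "finite {card K | K. K \<subseteq> S \<and> is_clique E K}"
proof (rule finite_subset)
  show "{card K | K. K \<subseteq> S \<and> is_clique E K} \<subseteq> card ` Pow S" by blast
qed (use assms in simp)

lemma clique_number_le:
  assumes "finite S" "\<And>K. K \<subseteq> S \<Longrightarrow> is_clique E K \<Longrightarrow> card K \<le> m"
  shows "clique_number E S \<le> m"
  unfolding clique_number_def
proof (rule Max.boundedI)
  show "finite {card K |K. K \<subseteq> S \<and> is_clique E K}"
    using assms(1) by (rule finite_clique_sizes)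
  show "{card K |K. K \<subseteq> S \<and> is_clique E K} \<noteq> {}"
    unfolding is_clique_def by blast
qed (use assms(2) in blast)

lemma card_clique_le_clique_number:
  assumes "finite S" "K \<subseteq> S" "is_clique E K"
  shows "card K \<le> clique_number E S"
  unfolding clique_number_def using assms finite_clique_sizes[OF assms(1)] by (intro Max_ge) auto

lemma clique_number_le_chromatic_number:
  assumes "finite S"
  shows "clique_number E S \<le> chromatic_number E S"
proof -
  obtain f :: "'a \<Rightarrow> nat" where f: "f ` S \<subseteq> {..<chromatic_number E S}" "proper_colouring E S f"
    using chromatic_number_colouring[OF assms] .
  show ?thesis
  proof (rule clique_number_le[OF assms])
    fix K assume "K \<subseteq> S" "is_clique E K"
    then show "card K \<le> chromatic_number E S"
      using card_clique_le_card_colours[OF f(2,1)] by simp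
  qed
qed

lemma clique_number_eq_chromatic_number:
  assumes "finite S" "K \<subseteq> S" "is_clique E K"
    and "proper_colouring E S f" "f ` S \<subseteq> C" "finite C" "card C \<le> card K"
  shows "clique_number E S = chromatic_number E S"
proof (rule antisym)
  show "clique_number E S \<le> chromatic_number E S"
    using assms(1) by (rule clique_number_le_chromatic_number)
  have "chromatic_number E S \<le> card C"
    using assms(4-6) by (rule chromatic_number_le)
  also have "\<dots> \<le> card K" by fact
  also have "\<dots> \<le> clique_number E S"
    using assms(1-3) by (rule card_clique_le_clique_number)
  finally show "chromatic_number E S \<le> clique_number E S" .
qed

definition cycle5_adj :: "nat \<Rightarrow> nat \<Rightarrow> bool" where
  "cycle5_adj i j \<longleftrightarrow> j = Suc i mod 5 \<or> i = Suc j mod 5"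

lemma less_5_cases: "i < (5::nat) \<longleftrightarrow> i = 0 \<or> i = 1 \<or> i = 2 \<or> i = 3 \<or> i = 4"
  by auto

lemma cycle5_triangle_free:
  assumes "i < 5" "j < 5" "k < 5" "cycle5_adj i j" "cycle5_adj j k" "cycle5_adj i k"
  shows False
  using assms unfolding less_5_cases by (elim disjE) (simp_all add: cycle5_adj_def)

lemma cycle5_not_2_colourable:
  fixes g :: "nat \<Rightarrow> nat"
  assumes "\<And>i. i < 5 \<Longrightarrow> g i < 2" "\<And>i. i < 5 \<Longrightarrow> g i \<noteq> g (Suc i mod 5)"
  shows False
proof -
  have alternate: "g i = g (i + 2)" if "i + 2 < 5" for i
    using assms(1)[of i] assms(1)[of "i + 1"] assms(1)[of "i + 2"]
      assms(2)[of i] assms(2)[of "i + 1"] that by auto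
  have "g 4 = g 0"
    using alternate[of 0] alternate[of 2] by (simp add: eval_nat_numeral)
  then show False
    using assms(2)[of 4] by simp
qed

lemma cycle5_adj_irrefl: "i < 5 \<Longrightarrow> \<not> cycle5_adj i i"
  unfolding less_5_cases cycle5_adj_def by auto

lemma clique_number_neq_chromatic_number_cycle5:
  assumes adj: "\<And>i j. i < 5 \<Longrightarrow> j < 5 \<Longrightarrow> E (v i) (v j) \<longleftrightarrow> cycle5_adj i j"
  shows "clique_number E (v ` {..<5}) \<noteq> chromatic_number E (v ` {..<5})"
proof -
  let ?S = "v ` {..<5}"
  have "card K \<le> 2" if K: "K \<subseteq> ?S" "is_clique E K" for K
  proof (rule ccontr)
    assume "\<not> card K \<le> 2"
    then obtain T where "T \<subseteq> K" "card T = 3"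
      using obtain_subset_with_card_n[of 3 K] by auto
    then obtain x y z where xyz: "x \<in> K" "y \<in> K" "z \<in> K" "x \<noteq> y" "y \<noteq> z" "x \<noteq> z"
      unfolding card_3_iff by blast
    have "E x y" "E y z" "E x z"
      using K(2) xyz unfolding is_clique_def by blast+
    have index: "\<exists>i<5. w = v i" if "w \<in> K" for w
      using K(1) that by auto
    obtain i where i: "i < 5" "x = v i" using index[OF xyz(1)] by blast
    obtain j where j: "j < 5" "y = v j" using index[OF xyz(2)] by blast
    obtain k where k: "k < 5" "z = v k" using index[OF xyz(3)] by blast
    show False
      using cycle5_triangle_free[OF i(1) j(1) k(1)] adj[OF i(1) j(1)] adj[OF j(1) k(1)] adj[OF i(1) k(1)]
        \<open>E x y\<close> \<open>E y z\<close> \<open>E x z\<close> i(2) j(2) k(2) by blast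
  qed
  then have "clique_number E ?S \<le> 2"
    by (intro clique_number_le) simp_all
  moreover have "3 \<le> chromatic_number E ?S"
  proof (rule ccontr)
    assume "\<not> 3 \<le> chromatic_number E ?S"
    then have two_colours: "chromatic_number E ?S \<le> 2" by simp
    obtain f :: "'a \<Rightarrow> nat"
      where f: "f ` ?S \<subseteq> {..<chromatic_number E ?S}" "proper_colouring E ?S f"
      using chromatic_number_colouring[of ?S E] by blast
    show False
    proof (rule cycle5_not_2_colourable[of "f \<circ> v"])
      fix i :: nat assume i: "i < 5"
      then show "(f \<circ> v) i < 2"
        using f(1) two_colours by fastforce
      have next_i: "Suc i mod 5 < 5" by simp
      have "\<not> E (v i) (v i)"
        using adj[OF i i] cycle5_adj_irrefl[OF i] by simp
      moreover have "E (v i) (v (Suc i mod 5))"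
        using adj[OF i next_i] by (simp add: cycle5_adj_def)
      ultimately show "(f \<circ> v) i \<noteq> (f \<circ> v) (Suc i mod 5)"
        using f(2) i next_i unfolding proper_colouring_def by (metis comp_apply image_eqI lessThan_iff)
    qed
  qed
  ultimately show ?thesis by linarith
qed

section \<open>Disjointness graphs of subsets of a four-element set\<close>

locale support_disjointness_graph =
  fixes V :: "'a set" and E :: "'a \<Rightarrow> 'a \<Rightarrow> bool" and supp :: "'a \<Rightarrow> 'b set" and U :: "'b set"
  assumes finite_V: "finite V" and finite_U: "finite U" and card_U: "card U \<le> 4"
    and supp_nonempty: "I \<in> V \<Longrightarrow> supp I \<noteq> {}"
    and supp_subset: "I \<in> V \<Longrightarrow> supp I \<subseteq> U"
    and adj_iff: "I \<in> V \<Longrightarrow> J \<in> V \<Longrightarrow> E I J \<longleftrightarrow> I \<noteq> J \<and> supp I \<inter> supp J = {}"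
begin

definition atoms :: "'a set \<Rightarrow> 'b set" where
  "atoms S = {i. \<exists>I\<in>S. supp I = {i}}"

definition rest :: "'a set \<Rightarrow> 'a set" where
  "rest S = {I \<in> S. supp I \<inter> atoms S = {}}"

definition atom_colour :: "'a set \<Rightarrow> 'a \<Rightarrow> 'b option" where
  "atom_colour S I = (if I \<in> rest S then None else Some (SOME i. i \<in> supp I \<inter> atoms S))"

lemma atoms_subset: "S \<subseteq> V \<Longrightarrow> atoms S \<subseteq> U"
  using supp_subset unfolding atoms_def by fastforce

lemma finite_supp: "I \<in> V \<Longrightarrow> finite (supp I)"
  using supp_subset finite_U by (rule finite_subset)

lemma finite_atoms: "S \<subseteq> V \<Longrightarrow> finite (atoms S)"
  using atoms_subset finite_U by (rule finite_subset)

lemma atom_colour_in: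
  assumes "I \<in> S - rest S"
  obtains i where "atom_colour S I = Some i" "i \<in> supp I \<inter> atoms S"
proof -
  have "\<exists>i. i \<in> supp I \<inter> atoms S"
    using assms unfolding rest_def by blast
  then have "(SOME i. i \<in> supp I \<inter> atoms S) \<in> supp I \<inter> atoms S"
    by (rule someI_ex)
  then show thesis
    using that assms unfolding atom_colour_def by simp
qed

lemma atom_colour_non_rest: "I \<in> S - rest S \<Longrightarrow> atom_colour S I \<in> Some ` atoms S"
  by (metis atom_colour_in IntD2 imageI)

lemma atom_colour_image: "atom_colour S ` S \<subseteq> insert None (Some ` atoms S)"
  using atom_colour_non_rest unfolding atom_colour_def by fastforce

lemma atom_colour_image_no_rest: "rest S = {} \<Longrightarrow> atom_colour S ` S \<subseteq> Some ` atoms S"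
  using atom_colour_non_rest by blast

lemma atom_colour_proper:
  assumes "S \<subseteq> V" and rest_independent: "\<forall>I\<in>rest S. \<forall>J\<in>rest S. \<not> E I J"
  shows "proper_colouring E S (atom_colour S)"
  unfolding proper_colouring_def
proof (intro ballI impI)
  fix I J assume "I \<in> S" "J \<in> S" "I \<noteq> J \<and> E I J"
  then have disjoint: "supp I \<inter> supp J = {}"
    using assms(1) adj_iff by blast
  consider "I \<in> rest S" "J \<in> rest S" | "I \<in> S - rest S" "J \<in> rest S" | "I \<in> rest S" "J \<in> S - rest S"
    | "I \<in> S - rest S" "J \<in> S - rest S"
    using \<open>I \<in> S\<close> \<open>J \<in> S\<close> by blast
  then show "atom_colour S I \<noteq> atom_colour S J"
  proof cases
    case 1
    then show ?thesis using rest_independent \<open>I \<noteq> J \<and> E I J\<close> by blast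
  next
    case 2
    then show ?thesis by (metis atom_colour_in atom_colour_def option.distinct(1))
  next
    case 3
    then show ?thesis by (metis atom_colour_in atom_colour_def option.distinct(1))
  next
    case 4
    then show ?thesis
      using disjoint by (metis atom_colour_in disjoint_iff IntD1 option.inject)
  qed
qed

lemma atoms_clique:
  assumes "S \<subseteq> V"
  obtains K where "K \<subseteq> S" "is_clique E K" "card K = card (atoms S)" "\<forall>I\<in>K. supp I \<subseteq> atoms S"
proof -
  define rep where "rep i = (SOME I. I \<in> S \<and> supp I = {i})" for i
  have rep: "rep i \<in> S" "supp (rep i) = {i}" if "i \<in> atoms S" for i
    using someI_ex[of "\<lambda>I. I \<in> S \<and> supp I = {i}"] that unfolding atoms_def rep_def by blast+
  have "inj_on rep (atoms S)"
    by (metis inj_onI rep(2) singleton_inject)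
  show thesis
  proof
    show "rep ` atoms S \<subseteq> S" "\<forall>I\<in>rep ` atoms S. supp I \<subseteq> atoms S"
      using rep by auto
    show "card (rep ` atoms S) = card (atoms S)"
      using \<open>inj_on rep (atoms S)\<close> by (rule card_image)
    show "is_clique E (rep ` atoms S)"
      unfolding is_clique_def
    proof (intro ballI impI)
      fix I J assume "I \<in> rep ` atoms S" "J \<in> rep ` atoms S" "I \<noteq> J"
      then obtain i j where "i \<in> atoms S" "j \<in> atoms S" "I = rep i" "J = rep j" "i \<noteq> j"
        by auto
      moreover have "I \<in> V" "J \<in> V"
        using calculation rep(1) assms by auto
      ultimately show "E I J"
        using rep(2) \<open>I \<noteq> J\<close> adj_iff[of I J] by auto
    qed
  qed
qed

lemma card_supp_ge_2:
  assumes "S \<subseteq> V" "I \<in> rest S"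
  shows "2 \<le> card (supp I)"
proof -
  have "I \<in> V" "supp I \<inter> atoms S = {}"
    using assms unfolding rest_def by auto
  then have "finite (supp I)" "supp I \<noteq> {}"
    using finite_supp supp_nonempty by auto
  moreover have "card (supp I) \<noteq> 1"
    using assms unfolding rest_def atoms_def by (auto simp: card_1_singleton_iff)
  ultimately show ?thesis
    by (metis One_nat_def card_0_eq less_2_cases not_less)
qed

lemma clique_number_eq_chromatic_number_if_rest_independent:
  assumes S: "S \<subseteq> V" and rest_independent: "\<forall>I\<in>rest S. \<forall>J\<in>rest S. \<not> E I J"
  shows "clique_number E S = chromatic_number E S"
proof -
  have finite_S: "finite S"
    using S finite_V by (rule finite_subset)
  have proper: "proper_colouring E S (atom_colour S)"
    using S rest_independent by (rule atom_colour_proper)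
  obtain K where K: "K \<subseteq> S" "is_clique E K" "card K = card (atoms S)" "\<forall>I\<in>K. supp I \<subseteq> atoms S"
    using atoms_clique[OF S] .
  show ?thesis
  proof (cases "rest S = {}")
    case True
    show ?thesis
      using finite_S K(1,2) proper atom_colour_image_no_rest[OF True] finite_imageI[OF finite_atoms[OF S]]
    proof (rule clique_number_eq_chromatic_number)
      show "card (Some ` atoms S) \<le> card K"
        using K(3) by (simp add: card_image)
    qed
  next
    case False
    then obtain J where J: "J \<in> rest S" by blast
    then have "J \<in> V" "supp J \<inter> atoms S = {}"
      using S unfolding rest_def by auto
    then have J_adj: "E J I \<and> E I J" if "I \<in> K" for I
      using that K(1,4) S supp_nonempty adj_iff by blast
    then have "J \<notin> K"
      using \<open>J \<in> V\<close> adj_iff by blast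
    have "is_clique E (insert J K)"
      using K(2) J_adj unfolding is_clique_def by blast
    moreover have "card (insert None (Some ` atoms S)) \<le> card (insert J K)"
      using K(3) \<open>J \<notin> K\<close> finite_atoms[OF S] finite_subset[OF K(1) finite_S]
      by (simp add: card_image)
    moreover have "insert J K \<subseteq> S"
      using J K(1) unfolding rest_def by blast
    ultimately show ?thesis
      using finite_S proper atom_colour_image finite_atoms[OF S]
      by (intro clique_number_eq_chromatic_number[where C = "insert None (Some ` atoms S)"]) auto
  qed
qed

lemma clique_number_eq_chromatic_number_if_rest_edge:
  assumes S: "S \<subseteq> V" and J: "J\<^sub>1 \<in> rest S" "J\<^sub>2 \<in> rest S" "E J\<^sub>1 J\<^sub>2"
  shows "clique_number E S = chromatic_number E S"
proof -
  have finite_S: "finite S"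
    using S finite_V by (rule finite_subset)
  have V: "J\<^sub>1 \<in> V" "J\<^sub>2 \<in> V"
    using J S unfolding rest_def by auto
  then have disjoint: "J\<^sub>1 \<noteq> J\<^sub>2" "supp J\<^sub>1 \<inter> supp J\<^sub>2 = {}"
    using J(3) adj_iff by auto
  have "4 \<le> card (supp J\<^sub>1) + card (supp J\<^sub>2)"
    using card_supp_ge_2[OF S J(1)] card_supp_ge_2[OF S J(2)] by linarith
  also have "\<dots> = card (supp J\<^sub>1 \<union> supp J\<^sub>2)"
    using finite_supp V disjoint(2) by (simp add: card_Un_disjoint)
  also have "\<dots> \<le> card (U - atoms S)"
    using J V supp_subset finite_U unfolding rest_def by (intro card_mono) auto
  also have "\<dots> = card U - card (atoms S)"
    using finite_atoms[OF S] atoms_subset[OF S] by (rule card_Diff_subset)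
  finally have "card (atoms S) = 0"
    using card_U by linarith
  then have "atoms S = {}"
    using finite_atoms[OF S] by simp
  then have big: "2 \<le> card (supp I)" if "I \<in> S" for I
    using card_supp_ge_2[OF S] that unfolding rest_def by simp
  obtain a where a: "a \<in> supp J\<^sub>1"
    using supp_nonempty[OF V(1)] by blast
  show ?thesis
  proof (rule clique_number_eq_chromatic_number[OF finite_S])
    show "{J\<^sub>1, J\<^sub>2} \<subseteq> S" "is_clique E {J\<^sub>1, J\<^sub>2}"
      using J disjoint V adj_iff unfolding rest_def is_clique_def by auto
    show "(\<lambda>I. a \<in> supp I) ` S \<subseteq> UNIV" "finite (UNIV :: bool set)"
      "card (UNIV :: bool set) \<le> card {J\<^sub>1, J\<^sub>2}"
      using disjoint by simp_all
    show "proper_colouring E S (\<lambda>I. a \<in> supp I)"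
      unfolding proper_colouring_def
    proof (intro ballI impI notI)
      fix I I' assume I: "I \<in> S" "I' \<in> S" "I \<noteq> I' \<and> E I I'" "(a \<in> supp I) = (a \<in> supp I')"
      then have disjoint_I: "supp I \<inter> supp I' = {}" and "a \<notin> supp I \<union> supp I'"
        using S adj_iff by blast+
      moreover have "I \<in> V" "I' \<in> V"
        using I(1,2) S by auto
      ultimately have "supp I \<union> supp I' \<subseteq> U - {a}"
        using supp_subset by auto
      have "card (supp I) + card (supp I') = card (supp I \<union> supp I')"
        using finite_supp \<open>I \<in> V\<close> \<open>I' \<in> V\<close> disjoint_I by (simp add: card_Un_disjoint)
      also have "\<dots> \<le> card (U - {a})"
        using \<open>supp I \<union> supp I' \<subseteq> U - {a}\<close> finite_U by (intro card_mono) auto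
      also have "\<dots> \<le> 3"
        using card_U a supp_subset[OF V(1)] finite_U by auto
      finally show False
        using big[OF I(1)] big[OF I(2)] by linarith
    qed
  qed
qed

theorem perfect: "perfect_graph V E"
  unfolding perfect_graph_def
proof (intro allI impI)
  fix S assume S: "S \<subseteq> V"
  show "clique_number E S = chromatic_number E S"
  proof (cases "\<forall>I\<in>rest S. \<forall>J\<in>rest S. \<not> E I J")
    case True
    with S show ?thesis
      by (rule clique_number_eq_chromatic_number_if_rest_independent)
  next
    case False
    then show ?thesis
      using S clique_number_eq_chromatic_number_if_rest_edge by blast
  qed
qed

end

section \<open>Divisors of products of prime powers\<close>

lemma prod_primes_dvd_iff:
  fixes p :: "'i \<Rightarrow> 'a :: factorial_semiring_gcd"
  assumes "finite A" "\<forall>i\<in>A. prime (p i)" "inj_on p A"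
  shows "(\<Prod>i\<in>A. p i) dvd x \<longleftrightarrow> (\<forall>i\<in>A. p i dvd x)"
  using assms
proof (induction A rule: finite_induct)
  case (insert j A)
  have "coprime (p j) (\<Prod>i\<in>A. p i)"
  proof (rule prod_coprime_right)
    fix i assume "i \<in> A"
    then have "p j \<noteq> p i"
      using insert.hyps(2) insert.prems(2) by (metis inj_on_contraD insertCI)
    then show "coprime (p j) (p i)"
      using insert.prems(1) \<open>i \<in> A\<close> by (simp add: primes_coprime)
  qed
  then have "p j * (\<Prod>i\<in>A. p i) dvd x \<longleftrightarrow> p j dvd x \<and> (\<Prod>i\<in>A. p i) dvd x"
    by (meson divides_mult dvd_mult_left dvd_mult_right)
  then show ?case
    using insert by (simp add: inj_on_insert)
qed simp

lemma prod_prime_powers_dvd_iff: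
  fixes p :: "'i \<Rightarrow> 'a :: factorial_semiring"
  assumes A: "finite A" and p: "\<forall>i\<in>A. prime (p i)" "inj_on p A"
  shows "(\<Prod>i\<in>A. p i ^ k i) dvd (\<Prod>i\<in>A. p i ^ l i) \<longleftrightarrow> (\<forall>i\<in>A. k i \<le> l i)"
proof
  assume "\<forall>i\<in>A. k i \<le> l i"
  then show "(\<Prod>i\<in>A. p i ^ k i) dvd (\<Prod>i\<in>A. p i ^ l i)"
    by (intro prod_dvd_prod le_imp_power_dvd) simp
next
  have nonzero: "(\<Prod>i\<in>A. p i ^ m i) \<noteq> 0" for m
    using A p(1) by (auto simp: prod_zero_iff)
  have multiplicity: "multiplicity (p i) (\<Prod>j\<in>A. p j ^ m j) = m i" if "i \<in> A" for i m
  proof -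
    have "multiplicity (p i) (\<Prod>j\<in>A. p j ^ m j) = (\<Sum>j\<in>A. multiplicity (p i) (p j ^ m j))"
      using A p(1) that by (intro prime_elem_multiplicity_prod_distrib) auto
    also have "\<dots> = (\<Sum>j\<in>A. if j = i then m i else 0)"
    proof (intro sum.cong)
      fix j assume "j \<in> A"
      then show "multiplicity (p i) (p j ^ m j) = (if j = i then m i else 0)"
        using p that multiplicity_distinct_prime_power[of "p i" "p j"] inj_on_contraD[OF p(2)]
        by (cases "j = i") (auto intro: prime_imp_prime_elem)
    qed simp
    also have "\<dots> = m i"
      using A that by simp
    finally show ?thesis .
  qed
  assume "(\<Prod>i\<in>A. p i ^ k i) dvd (\<Prod>i\<in>A. p i ^ l i)"
  then show "\<forall>i\<in>A. k i \<le> l i"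
    using dvd_imp_multiplicity_le nonzero multiplicity by metis
qed

(* Exponent vectors of five divisors d_0, ..., d_4 of n = prod p_i^alpha_i such that n divides
   d_s d_t exactly when s and t are neighbours on the 5-cycle. The non-edges {0, 2} and {0, 3}
   are where alpha_1 >= 2 is needed. *)
definition cycle5_exponents :: "(nat \<Rightarrow> nat) \<Rightarrow> nat \<Rightarrow> nat \<Rightarrow> nat" where
  "cycle5_exponents \<alpha> s = [\<alpha>(1 := 0), \<alpha>(2 := 0, 3 := 0), \<alpha>(1 := 1, 4 := 0),
     \<alpha>(1 := \<alpha> 1 - 1, 2 := 0), \<alpha>(3 := 0, 4 := 0)] ! s"

lemma cycle5_exponents_outside:
  "s < 5 \<Longrightarrow> i \<notin> {1, 2, 3, 4} \<Longrightarrow> cycle5_exponents \<alpha> s i = \<alpha> i"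
  unfolding less_5_cases cycle5_exponents_def by auto

lemma cycle5_exponents_le:
  "s < 5 \<Longrightarrow> 1 \<le> \<alpha> 1 \<Longrightarrow> cycle5_exponents \<alpha> s i \<le> \<alpha> i"
  unfolding less_5_cases cycle5_exponents_def by auto

lemma cycle5_exponents_proper:
  assumes "s < 5" "\<forall>i\<in>{1, 2, 3, 4}. 1 \<le> \<alpha> i"
  shows "\<exists>i\<in>{1, 2, 3, 4}. cycle5_exponents \<alpha> s i < \<alpha> i"
    and "\<exists>i\<in>{1, 2, 3, 4}. 0 < cycle5_exponents \<alpha> s i"
  using assms unfolding less_5_cases cycle5_exponents_def by auto

lemma cycle5_exponents_sum_ge_iff:
  assumes "s < 5" "t < 5" "\<forall>i\<in>{1, 2, 3, 4}. 1 \<le> \<alpha> i" "2 \<le> \<alpha> 1"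
  shows "(\<forall>i\<in>{1, 2, 3, 4}. \<alpha> i \<le> cycle5_exponents \<alpha> s i + cycle5_exponents \<alpha> t i)
    \<longleftrightarrow> cycle5_adj s t"
  using assms unfolding less_5_cases
  by (elim disjE) (simp_all add: cycle5_exponents_def cycle5_adj_def)

lemma cycle5_divisors:
  fixes p \<alpha> :: "nat \<Rightarrow> nat"
  assumes A: "finite A" "{1, 2, 3, 4} \<subseteq> A" and p: "\<forall>i\<in>A. prime (p i)" "inj_on p A"
    and \<alpha>: "\<forall>i\<in>A. 1 \<le> \<alpha> i" "2 \<le> \<alpha> 1"
  defines "N \<equiv> \<Prod>i\<in>A. p i ^ \<alpha> i"
    and "d \<equiv> \<lambda>s. \<Prod>i\<in>A. p i ^ cycle5_exponents \<alpha> s i"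
  assumes s: "s < 5"
  shows "d s dvd N" "\<not> N dvd d s" "\<not> d s dvd 1"
    and "t < 5 \<Longrightarrow> N dvd d s * d t \<longleftrightarrow> cycle5_adj s t"
proof -
  note dvd_iff = prod_prime_powers_dvd_iff[OF A(1) p]
  have \<alpha>_small: "\<forall>i\<in>{1, 2, 3, 4}. 1 \<le> \<alpha> i"
    using A(2) \<alpha>(1) by blast
  show "d s dvd N"
    unfolding d_def N_def dvd_iff using s \<alpha>(2) by (simp add: cycle5_exponents_le)
  have "\<not> (\<forall>i\<in>A. \<alpha> i \<le> cycle5_exponents \<alpha> s i)"
    using cycle5_exponents_proper(1)[OF s \<alpha>_small] A(2) by (meson not_le subsetD)
  then show "\<not> N dvd d s"
    unfolding d_def N_def dvd_iff .
  have "\<not> (\<forall>i\<in>A. cycle5_exponents \<alpha> s i \<le> 0)"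
    using cycle5_exponents_proper(2)[OF s \<alpha>_small] A(2) by (meson not_le subsetD)
  then show "\<not> d s dvd 1"
    using dvd_iff[of "cycle5_exponents \<alpha> s" "\<lambda>_. 0"] unfolding d_def by simp
  assume t: "t < 5"
  have "d s * d t = (\<Prod>i\<in>A. p i ^ (cycle5_exponents \<alpha> s i + cycle5_exponents \<alpha> t i))"
    unfolding d_def by (simp add: power_add prod.distrib)
  then have "N dvd d s * d t
      \<longleftrightarrow> (\<forall>i\<in>A. \<alpha> i \<le> cycle5_exponents \<alpha> s i + cycle5_exponents \<alpha> t i)"
    unfolding N_def by (simp add: dvd_iff)
  also have "\<dots> \<longleftrightarrow> (\<forall>i\<in>{1, 2, 3, 4}. \<alpha> i \<le> cycle5_exponents \<alpha> s i + cycle5_exponents \<alpha> t i)"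
    using A(2) s t cycle5_exponents_outside by (metis le_add1 subsetD)
  also have "\<dots> \<longleftrightarrow> cycle5_adj s t"
    using s t \<alpha>_small \<alpha>(2) by (rule cycle5_exponents_sum_ge_iff)
  finally show "N dvd d s * d t \<longleftrightarrow> cycle5_adj s t" .
qed

section \<open>Annihilating-ideal graphs of residue rings\<close>

lemma (in ring) ideal_prod_eq_zero_iff:
  assumes "ideal I R" "ideal J R"
  shows "ideal_prod R I J = {\<zero>} \<longleftrightarrow> (\<forall>i\<in>I. \<forall>j\<in>J. i \<otimes> j = \<zero>)"
proof
  assume "ideal_prod R I J = {\<zero>}"
  then show "\<forall>i\<in>I. \<forall>j\<in>J. i \<otimes> j = \<zero>"
    using ideal_prod.prod[of _ I _ J R] by (metis singletonD)
next
  assume zero: "\<forall>i\<in>I. \<forall>j\<in>J. i \<otimes> j = \<zero>"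
  have "s = \<zero>" if "s \<in> ideal_prod R I J" for s
    using that by induction (simp_all add: zero)
  moreover have "\<zero> \<in> ideal_prod R I J"
    using additive_subgroup.zero_closed[OF ideal.axioms(1)[OF ideal_prod_is_ideal[OF assms]]] .
  ultimately show "ideal_prod R I J = {\<zero>}"
    by (metis singleton_iff subset_antisym subsetI)
qed

lemma finite_AG_vertices:
  assumes "finite (carrier R)"
  shows "finite (AG_vertices R)"
proof (rule finite_subset)
  show "AG_vertices R \<subseteq> Pow (carrier R)"
    unfolding AG_vertices_def using ideal.Icarr by fastforce
qed (use assms in simp)

lemma residue_ring_cring: "1 < N \<Longrightarrow> cring (residue_ring N)"
  by (rule residues.cring) unfold_locales

lemma AG_adj_residue_ring_iff:
  assumes "1 < N" "ideal I (residue_ring N)" "ideal J (residue_ring N)"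
  shows "AG_adj (residue_ring N) I J \<longleftrightarrow> I \<noteq> J \<and> (\<forall>x\<in>I. \<forall>y\<in>J. N dvd x * y)"
  using ring.ideal_prod_eq_zero_iff[OF cring.axioms(1)[OF residue_ring_cring[OF assms(1)]] assms(2,3)]
  unfolding AG_adj_def by (simp add: residue_ring_def dvd_eq_mod_eq_0)

lemma residue_ring_PIdl_annihilates_iff:
  assumes "1 < N" "a \<in> {0..<N}" "b \<in> {0..<N}"
  shows "(\<forall>x\<in>PIdl\<^bsub>residue_ring N\<^esub> a. \<forall>y\<in>PIdl\<^bsub>residue_ring N\<^esub> b. N dvd x * y) \<longleftrightarrow> N dvd a * b"
proof -
  have PIdl: "PIdl\<^bsub>residue_ring N\<^esub> c = {(u * c) mod N | u. u \<in> {0..N - 1}}" for c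
    unfolding cgenideal_def by (simp add: residue_ring_def)
  have "c \<in> PIdl\<^bsub>residue_ring N\<^esub> c" if "c \<in> {0..<N}" for c
  proof -
    have "c = (1 * c) mod N" "1 \<in> {0..N - 1}"
      using that assms(1) by simp_all
    then show ?thesis
      unfolding PIdl by blast
  qed
  then have "a \<in> PIdl\<^bsub>residue_ring N\<^esub> a" "b \<in> PIdl\<^bsub>residue_ring N\<^esub> b"
    using assms(2,3) by blast+
  moreover have "N dvd x * y"
    if ab: "N dvd a * b" and xy: "x \<in> PIdl\<^bsub>residue_ring N\<^esub> a" "y \<in> PIdl\<^bsub>residue_ring N\<^esub> b"
    for x y
  proof -
    obtain u w where "x = (u * a) mod N" "y = (w * b) mod N"
      using xy unfolding PIdl by blast
    then have "(x * y) mod N = (u * w * (a * b)) mod N"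
      by (simp add: mod_mult_eq ac_simps)
    moreover have "N dvd u * w * (a * b)"
      using ab by (rule dvd_mult)
    ultimately show ?thesis
      by (simp add: dvd_eq_mod_eq_0)
  qed
  ultimately show ?thesis
    by blast
qed

lemma residue_ring_PIdl_in_AG_vertices:
  assumes "1 < a" "a < N" "a dvd N"
  shows "PIdl\<^bsub>residue_ring N\<^esub> a \<in> AG_vertices (residue_ring N)"
proof -
  obtain u where u: "N = a * u"
    using assms(3) by blast
  have "0 < u"
    using assms u by (simp add: zero_less_mult_iff)
  have "u < N"
    using mult_strict_right_mono[OF assms(1) \<open>0 < u\<close>] u by linarith
  have "(u * ((w * a) mod N)) mod N = 0" for w
  proof -
    have "(u * ((w * a) mod N)) mod N = (u * (w * a)) mod N"
      by (rule mod_mult_right_eq)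
    also have "u * (w * a) = w * N"
      using u by simp
    finally show ?thesis by simp
  qed
  then have annihilator: "u \<in> annihilator (residue_ring N) (PIdl\<^bsub>residue_ring N\<^esub> a)"
    using \<open>0 < u\<close> \<open>u < N\<close> unfolding annihilator_def cgenideal_def by (auto simp: residue_ring_def)
  have cring: "cring (residue_ring N)"
    using assms(1,2) by (intro residue_ring_cring) simp
  have a: "a \<in> carrier (residue_ring N)"
    using assms(1,2) by (simp add: residue_ring_def)
  show ?thesis
    using annihilator ring.cgenideal_self[OF cring.axioms(1)[OF cring] a]
      cring.cgenideal_ideal[OF cring a] \<open>0 < u\<close> assms(1)
    unfolding AG_vertices_def by (auto simp: residue_ring_def)
qed

lemma not_AG_perfect_residue_ring_if_cycle5_divisors:
  fixes N :: nat and d :: "nat \<Rightarrow> nat"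
  assumes divisor: "\<And>s. s < 5 \<Longrightarrow> d s dvd N \<and> \<not> N dvd d s \<and> \<not> d s dvd 1"
    and adj: "\<And>s t. s < 5 \<Longrightarrow> t < 5 \<Longrightarrow> N dvd d s * d t \<longleftrightarrow> cycle5_adj s t"
  shows "\<not> AG_perfect (residue_ring (int N))"
proof
  assume perfect: "AG_perfect (residue_ring (int N))"
  define v where "v s = PIdl\<^bsub>residue_ring (int N)\<^esub> (int (d s))" for s
  have "N \<noteq> 0"
  proof
    assume "N = 0"
    then have "d 0 * d 1 = 0"
      using adj[of 0 1] by (simp add: cycle5_adj_def)
    then show False
      using divisor[of 0] divisor[of 1] \<open>N = 0\<close> by auto
  qed
  have bounds: "1 < d s" "d s < N" if "s < 5" for s
  proof -
    have "d s \<noteq> 0" "d s \<noteq> 1" "d s \<noteq> N" "d s \<le> N"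
      using divisor[OF that] \<open>N \<noteq> 0\<close> by (auto intro: dvd_imp_le)
    then show "1 < d s" "d s < N" by simp_all
  qed
  then have "1 < int N"
    by (metis less_trans of_nat_1 of_nat_less_iff zero_less_numeral)
  have vertex: "v s \<in> AG_vertices (residue_ring (int N))" if "s < 5" for s
    unfolding v_def using bounds[OF that] divisor[OF that]
    by (intro residue_ring_PIdl_in_AG_vertices) simp_all
  have annihilates: "(\<forall>x\<in>v s. \<forall>y\<in>v t. int N dvd x * y) \<longleftrightarrow> cycle5_adj s t"
    if "s < 5" "t < 5" for s t
  proof -
    have "(\<forall>x\<in>v s. \<forall>y\<in>v t. int N dvd x * y) \<longleftrightarrow> int N dvd int (d s) * int (d t)"
      unfolding v_def using \<open>1 < int N\<close> bounds[OF that(1)] bounds[OF that(2)]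
      by (intro residue_ring_PIdl_annihilates_iff) simp_all
    also have "\<dots> \<longleftrightarrow> cycle5_adj s t"
      using adj[OF that] by (simp flip: of_nat_mult add: int_dvd_int_iff)
    finally show ?thesis .
  qed
  have "AG_adj (residue_ring (int N)) (v s) (v t) \<longleftrightarrow> cycle5_adj s t" if "s < 5" "t < 5" for s t
  proof -
    have ideals: "ideal (v s) (residue_ring (int N))" "ideal (v t) (residue_ring (int N))"
      using vertex that unfolding AG_vertices_def by blast+
    have "v s \<noteq> v t" if "cycle5_adj s t"
      using annihilates[of s s] annihilates[of s t] \<open>s < 5\<close> \<open>t < 5\<close> that cycle5_adj_irrefl by metis
    then show ?thesis
      unfolding AG_adj_residue_ring_iff[OF \<open>1 < int N\<close> ideals] annihilates[OF that] by blast
  qed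
  then have "clique_number (AG_adj (residue_ring (int N))) (v ` {..<5})
      \<noteq> chromatic_number (AG_adj (residue_ring (int N))) (v ` {..<5})"
    by (rule clique_number_neq_chromatic_number_cycle5)
  moreover have "v ` {..<5} \<subseteq> AG_vertices (residue_ring (int N))"
    using vertex by blast
  ultimately show False
    using perfect unfolding AG_perfect_def perfect_graph_def by blast
qed

lemma not_AG_perfect_residue_ring_non_squarefree:
  fixes p \<alpha> :: "nat \<Rightarrow> nat"
  assumes A: "finite A" "{1, 2, 3, 4} \<subseteq> A" and p: "\<forall>i\<in>A. prime (p i)" "inj_on p A"
    and \<alpha>: "\<forall>i\<in>A. 1 \<le> \<alpha> i" "j \<in> A" "2 \<le> \<alpha> j"
  shows "\<not> AG_perfect (residue_ring (int (\<Prod>i\<in>A. p i ^ \<alpha> i)))"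
proof -
  define \<sigma> where "\<sigma> = Transposition.transpose 1 j"
  have \<sigma>: "\<sigma> permutes A"
    unfolding \<sigma>_def using A(2) \<alpha>(2) by (intro permutes_swap_id) auto
  have "inj_on p (\<sigma> ` A)"
    using p(2) permutes_image[OF \<sigma>] by simp
  then have "inj_on (p \<circ> \<sigma>) A"
    by (rule comp_inj_on[OF permutes_inj_on[OF \<sigma>]])
  moreover have "\<forall>i\<in>A. prime ((p \<circ> \<sigma>) i)" "\<forall>i\<in>A. 1 \<le> (\<alpha> \<circ> \<sigma>) i"
    using p(1) \<alpha>(1) permutes_in_image[OF \<sigma>] by auto
  moreover have "2 \<le> (\<alpha> \<circ> \<sigma>) 1"
    using \<alpha>(3) unfolding \<sigma>_def by simp
  ultimately have "\<not> AG_perfect (residue_ring (int (\<Prod>i\<in>A. (p \<circ> \<sigma>) i ^ (\<alpha> \<circ> \<sigma>) i)))"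
    using cycle5_divisors[OF A, of "p \<circ> \<sigma>" "\<alpha> \<circ> \<sigma>"]
    by (intro not_AG_perfect_residue_ring_if_cycle5_divisors
        [where d = "\<lambda>s. \<Prod>i\<in>A. (p \<circ> \<sigma>) i ^ cycle5_exponents (\<alpha> \<circ> \<sigma>) s i"]) simp_all
  moreover have "(\<Prod>i\<in>A. (p \<circ> \<sigma>) i ^ (\<alpha> \<circ> \<sigma>) i) = (\<Prod>i\<in>A. p i ^ \<alpha> i)"
    using prod.permute[OF \<sigma>, of "\<lambda>i. p i ^ \<alpha> i"] by (simp add: comp_def)
  ultimately show ?thesis
    by metis
qed

lemma AG_perfect_residue_ring_squarefree:
  fixes p :: "'i \<Rightarrow> nat"
  assumes A: "finite A" "A \<noteq> {}" "card A \<le> 4" and p: "\<forall>i\<in>A. prime (p i)" "inj_on p A"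
  shows "AG_perfect (residue_ring (int (\<Prod>i\<in>A. p i)))"
proof -
  define N where "N = int (\<Prod>i\<in>A. p i)"
  obtain j where "j \<in> A"
    using A(2) by blast
  then have "p j dvd (\<Prod>i\<in>A. p i)" "0 < (\<Prod>i\<in>A. p i)"
    using A(1) p(1) by (auto intro: dvd_prodI simp: prime_gt_0_nat)
  then have "p j \<le> (\<Prod>i\<in>A. p i)"
    by (rule dvd_imp_le)
  moreover have "1 < p j"
    using p(1) \<open>j \<in> A\<close> prime_gt_1_nat by blast
  ultimately have "1 < (\<Prod>i\<in>A. p i)"
    by linarith
  then have "1 < N"
    unfolding N_def by (metis of_nat_1 of_nat_less_iff)
  have dvd_N: "N dvd x \<longleftrightarrow> (\<forall>i\<in>A. int (p i) dvd x)" for x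
    unfolding N_def of_nat_prod using A(1) p
    by (intro prod_primes_dvd_iff) (auto simp: inj_on_def)
  define supp where "supp I = {i\<in>A. \<exists>x\<in>I. \<not> int (p i) dvd x}" for I
  interpret support_disjointness_graph "AG_vertices (residue_ring N)" "AG_adj (residue_ring N)" supp A
  proof
    show "finite (AG_vertices (residue_ring N))"
      by (rule finite_AG_vertices) (simp add: residue_ring_def)
    show "finite A" "card A \<le> 4"
      using A by simp_all
    show "supp I \<subseteq> A" for I
      unfolding supp_def by blast
  next
    fix I assume "I \<in> AG_vertices (residue_ring N)"
    then have "ideal I (residue_ring N)" "I \<noteq> {0}"
      unfolding AG_vertices_def by (simp_all add: residue_ring_def)
    moreover have "0 \<in> I"
      using additive_subgroup.zero_closed[OF ideal.axioms(1)[OF \<open>ideal I (residue_ring N)\<close>]]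
      by (simp add: residue_ring_def)
    ultimately obtain x where "x \<in> I" "x \<noteq> 0"
      by blast
    moreover have "x \<in> {0..N - 1}"
      using ideal.Icarr[OF \<open>ideal I (residue_ring N)\<close> \<open>x \<in> I\<close>] by (simp add: residue_ring_def)
    ultimately have "\<not> N dvd x"
      using zdvd_imp_le by fastforce
    then show "supp I \<noteq> {}"
      unfolding supp_def dvd_N using \<open>x \<in> I\<close> by blast
  next
    fix I J assume "I \<in> AG_vertices (residue_ring N)" "J \<in> AG_vertices (residue_ring N)"
    then have ideals: "ideal I (residue_ring N)" "ideal J (residue_ring N)"
      unfolding AG_vertices_def by blast+
    have "N dvd x * y \<longleftrightarrow> (\<forall>i\<in>A. int (p i) dvd x \<or> int (p i) dvd y)" for x y
      unfolding dvd_N using p(1) by (simp add: prime_dvd_mult_iff)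
    then show "AG_adj (residue_ring N) I J \<longleftrightarrow> I \<noteq> J \<and> supp I \<inter> supp J = {}"
      unfolding AG_adj_residue_ring_iff[OF \<open>1 < N\<close> ideals] supp_def by blast
  qed
  show ?thesis
    unfolding AG_perfect_def N_def[symmetric] by (rule perfect)
qed

theorem lemma2:
  fixes p \<alpha> :: "nat \<Rightarrow> nat" and n :: nat
  assumes "\<forall>i\<in>{1..4}. prime (p i)"
    and "inj_on p {1..4}"
    and "\<forall>i\<in>{1..4}. \<alpha> i \<ge> 1"
    and "n = (\<Prod>i\<in>{1..4}. p i ^ \<alpha> i)"
  shows "AG_perfect (residue_ring (int n)) \<longleftrightarrow> (\<forall>i\<in>{1..4}. \<alpha> i = 1)"
proof
  assume perfect: "AG_perfect (residue_ring (int n))"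
  show "\<forall>i\<in>{1..4}. \<alpha> i = 1"
  proof (rule ccontr)
    assume "\<not> (\<forall>i\<in>{1..4}. \<alpha> i = 1)"
    then obtain j where j: "j \<in> {1..4}" "\<alpha> j \<noteq> 1"
      by blast
    moreover have "1 \<le> \<alpha> j"
      using assms(3) j(1) by blast
    ultimately have "2 \<le> \<alpha> j"
      by simp
    then have "\<not> AG_perfect (residue_ring (int n))"
      unfolding assms(4) using assms(1-3) j(1)
      by (intro not_AG_perfect_residue_ring_non_squarefree) auto
    then show False
      using perfect by contradiction
  qed
next
  assume "\<forall>i\<in>{1..4}. \<alpha> i = 1"
  then have "n = (\<Prod>i\<in>{1..4}. p i)"
    unfolding assms(4) by simp
  then show "AG_perfect (residue_ring (int n))"
    using AG_perfect_residue_ring_squarefree[of "{1..4}" p] assms(1,2) by simp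
qed

end
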